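(* Let $p_1,p_2,p_3,p_4$ be distinct primes with $p_3>p_1p_2$ and $p_4>p_1p_2$. Then the numerical semigroup $S=\langle p_1p_3,\,p_2p_3,\,p_1p_4,\,p_2p_4\rangle$ is a complete intersection but is not free.
   Context: A numerical semigroup is a submonoid $S$ of $(\mathbb N,+)$ with finite complement in $\mathbb N$, with minimal system of generators $g_1,\dots,g_\nu$. $S$ is a complete intersection if the semigroup ring $\Bbbk[[t^S]]$ is a complete intersection, equivalently if a minimal presentation of $S$ (a minimal generating set of the congruence $\ker(\mathbb N^\nu\to S,\ (\lambda_i)\mapsto\sum\lambda_ig_i)$) has cardinality $\nu-1$. For $n\in S$, $\mathrm{Ap}(S,n)=\{s\in S: s-n\notin S\}$. For an ordering $\mathbf n=(n_1,\dots,n_\nu)$ of the minimal generators, $\phi_i=\min\{h\in\mathbb N: hn_i\in\langle n_1,\dots,n_{i-1}\rangle\}-1$ ($i=2,\dots,\nu$). $S$ is free if for some ordering $\mathrm{Ap}(S,n_1)=\{\sum_{i=2}^\nu\lambda_in_i: 0\le\lambda_i\le\phi_i\}$. *)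

theory Defs
  imports "HOL-Computational_Algebra.Primes"
begin

inductive_set gen :: "nat set \<Rightarrow> nat set" for A :: "nat set" where
  gen_zero: "0 \<in> gen A"
| gen_add: "a \<in> A \<Longrightarrow> s \<in> gen A \<Longrightarrow> a + s \<in> gen A"

definition numerical_semigroup :: "nat set \<Rightarrow> bool" where
  "numerical_semigroup S \<longleftrightarrow> 0 \<in> S \<and> (\<forall>a\<in>S. \<forall>b\<in>S. a + b \<in> S) \<and> finite (UNIV - S)"

definition min_gen_sys :: "nat set \<Rightarrow> nat set \<Rightarrow> bool" where
  "min_gen_sys S G \<longleftrightarrow> gen G = S \<and> (\<forall>H. H \<subset> G \<longrightarrow> gen H \<noteq> S)"

text \<open>Elements of N^\<nu>, represented as functions vanishing from index \<nu> on
  (indices 0..\<nu>-1).\<close>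
definition vecs :: "nat \<Rightarrow> (nat \<Rightarrow> nat) set" where
  "vecs \<nu> = {x. \<forall>i\<ge>\<nu>. x i = 0}"

definition vadd :: "(nat \<Rightarrow> nat) \<Rightarrow> (nat \<Rightarrow> nat) \<Rightarrow> (nat \<Rightarrow> nat)" where
  "vadd x y = (\<lambda>i. x i + y i)"

definition fact_map :: "nat list \<Rightarrow> (nat \<Rightarrow> nat) \<Rightarrow> nat" where
  "fact_map ns x = (\<Sum>i<length ns. x i * ns ! i)"

definition kernel_cong :: "nat list \<Rightarrow> ((nat \<Rightarrow> nat) \<times> (nat \<Rightarrow> nat)) set" where
  "kernel_cong ns = {(x, y). x \<in> vecs (length ns) \<and> y \<in> vecs (length ns) \<and> fact_map ns x = fact_map ns y}"

inductive_set cong_gen :: "nat \<Rightarrow> ((nat \<Rightarrow> nat) \<times> (nat \<Rightarrow> nat)) set \<Rightarrow> ((nat \<Rightarrow> nat) \<times> (nat \<Rightarrow> nat)) set"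
  for \<nu> :: nat and \<rho> :: "((nat \<Rightarrow> nat) \<times> (nat \<Rightarrow> nat)) set" where
  cg_base: "p \<in> \<rho> \<Longrightarrow> p \<in> cong_gen \<nu> \<rho>"
| cg_refl: "x \<in> vecs \<nu> \<Longrightarrow> (x, x) \<in> cong_gen \<nu> \<rho>"
| cg_sym: "(x, y) \<in> cong_gen \<nu> \<rho> \<Longrightarrow> (y, x) \<in> cong_gen \<nu> \<rho>"
| cg_trans: "(x, y) \<in> cong_gen \<nu> \<rho> \<Longrightarrow> (y, z) \<in> cong_gen \<nu> \<rho> \<Longrightarrow> (x, z) \<in> cong_gen \<nu> \<rho>"
| cg_add: "(x, y) \<in> cong_gen \<nu> \<rho> \<Longrightarrow> z \<in> vecs \<nu> \<Longrightarrow> (vadd x z, vadd y z) \<in> cong_gen \<nu> \<rho>"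

definition minimal_presentation :: "nat list \<Rightarrow> ((nat \<Rightarrow> nat) \<times> (nat \<Rightarrow> nat)) set \<Rightarrow> bool" where
  "minimal_presentation ns \<rho> \<longleftrightarrow>
     \<rho> \<subseteq> vecs (length ns) \<times> vecs (length ns) \<and>
     cong_gen (length ns) \<rho> = kernel_cong ns \<and>
     (\<forall>\<sigma>. \<sigma> \<subset> \<rho> \<longrightarrow> cong_gen (length ns) \<sigma> \<noteq> kernel_cong ns)"

definition complete_intersection :: "nat set \<Rightarrow> bool" where
  "complete_intersection S \<longleftrightarrow>
     (\<exists>ns \<rho>. distinct ns \<and> min_gen_sys S (set ns) \<and> minimal_presentation ns \<rho> \<and>
             finite \<rho> \<and> card \<rho> = length ns - 1)"

definition Apery :: "nat set \<Rightarrow> nat \<Rightarrow> nat set" where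
  "Apery S n = {s \<in> S. \<not> (n \<le> s \<and> s - n \<in> S)}"

text \<open>phi for 0-based index i (paper's index i+1):
  least positive h with h * n_i in the monoid generated by the previous generators, minus 1.\<close>
definition phi :: "nat list \<Rightarrow> nat \<Rightarrow> nat" where
  "phi ns i = (LEAST h. h > 0 \<and> h * ns ! i \<in> gen (set (take i ns))) - 1"

definition free_sg :: "nat set \<Rightarrow> bool" where
  "free_sg S \<longleftrightarrow>
     (\<exists>ns. distinct ns \<and> min_gen_sys S (set ns) \<and> ns \<noteq> [] \<and>
        Apery S (ns ! 0) =
          {(\<Sum>i\<in>{1..<length ns}. l i * ns ! i) | l. \<forall>i\<in>{1..<length ns}. l i \<le> phi ns i})"

end

theory Submission
  imports Defs "HOL-Number_Theory.Cong"
begin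

text \<open>The generators are the products p_i q_j. Because q1, q2 exceed p1 p2, none of them
  lies in the monoid spanned by the other three, so they form the unique minimal system.
  The semigroup glues q1 <p1, p2> and q2 <p1, p2> along q1 q2: the binomials
  p2 e1 = p1 e2 and p2 e3 = p1 e4 together with one relation writing q1 q2 in both halves
  generate the kernel congruence, and each of the three is separated from the other two by
  a congruence, so this presentation is minimal and has 4 - 1 elements.
  It is not free: for any generator n1 put first, the bounds phi admit a box containing both
  the last generator and a combination of the middle two congruent to it modulo n1, whereas
  the Apery set of n1 meets every residue class at most once.\<close>

section \<open>Monoids generated by sets of naturals\<close>

lemma gen_base: "a \<in> A \<Longrightarrow> a \<in> gen A"
  using gen_add[OF _ gen_zero] by fastforce

lemma gen_add_closed: "s \<in> gen A \<Longrightarrow> t \<in> gen A \<Longrightarrow> s + t \<in> gen A"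
  by (induction s rule: gen.induct) (auto simp: add.assoc intro: gen.intros)

lemma gen_mult: "s \<in> gen A \<Longrightarrow> k * s \<in> gen A"
  by (induction k) (auto intro: gen_zero gen_add_closed)

lemma gen_mono: "A \<subseteq> B \<Longrightarrow> gen A \<subseteq> gen B"
proof
  fix x assume "x \<in> gen A" "A \<subseteq> B"
  then show "x \<in> gen B"
    by (induction x rule: gen.induct) (auto intro: gen.intros)
qed

lemma gen_dvd: "s \<in> gen A \<Longrightarrow> (\<And>a. a \<in> A \<Longrightarrow> d dvd a) \<Longrightarrow> d dvd s"
  by (induction s rule: gen.induct) auto

lemma gen_insert: "gen (insert a A) = {k * a + s | k s. s \<in> gen A}"
proof
  show "gen (insert a A) \<subseteq> {k * a + s | k s. s \<in> gen A}"
  proof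
    fix x assume "x \<in> gen (insert a A)"
    then show "x \<in> {k * a + s | k s. s \<in> gen A}"
    proof (induction x rule: gen.induct)
      case gen_zero
      then show ?case by (force intro: gen.intros)
    next
      case (gen_add b s)
      then obtain k t where s: "s = k * a + t" "t \<in> gen A" by auto
      show ?case
      proof (cases "b = a")
        case True
        then have "b + s = Suc k * a + t" using s by simp
        then show ?thesis using s by blast
      next
        case False
        then have "b + t \<in> gen A" using gen_add s by (auto intro: gen.intros)
        moreover have "b + s = k * a + (b + t)" using s by simp
        ultimately show ?thesis by blast
      qed
    qed
  qed
  show "{k * a + s | k s. s \<in> gen A} \<subseteq> gen (insert a A)"
  proof clarify
    fix k s assume "s \<in> gen A"
    then show "k * a + s \<in> gen (insert a A)"
      using gen_mono[of A "insert a A"] by (blast intro: gen_add_closed gen_mult gen_base)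
  qed
qed

lemma gen_Diff_zero: "gen (A - {0}) = gen A"
proof
  show "gen (A - {0}) \<subseteq> gen A" by (rule gen_mono) auto
  show "gen A \<subseteq> gen (A - {0})"
  proof
    fix x assume "x \<in> gen A"
    then show "x \<in> gen (A - {0})"
    proof (induction x rule: gen.induct)
      case (gen_add a s)
      then show ?case by (cases "a = 0") (auto intro: gen.intros)
    qed (rule gen_zero)
  qed
qed

lemma gen_Diff_greater: "x \<in> gen A \<Longrightarrow> x < g \<Longrightarrow> x \<in> gen (A - {g})"
  by (induction x rule: gen.induct) (auto intro: gen.intros)

definition irredundant :: "nat set \<Rightarrow> bool" where
  "irredundant G \<longleftrightarrow> (\<forall>g\<in>G. g \<notin> gen (G - {g}))"

lemma irredundant_min_gen_sys:
  assumes "irredundant G"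
  shows "min_gen_sys (gen G) G"
  unfolding min_gen_sys_def
proof (intro conjI allI impI notI)
  fix H assume "H \<subset> G" "gen H = gen G"
  then obtain g where g: "g \<in> G" "H \<subseteq> G - {g}" by auto
  then have "g \<in> gen (G - {g})"
    using gen_mono[OF g(2)] gen_base[OF g(1)] \<open>gen H = gen G\<close> by auto
  then show False using assms g(1) by (auto simp: irredundant_def)
qed simp

text \<open>Writing g = h + s with h in H, both summands are smaller than g unless s = 0,
  so irredundance forces G \<subseteq> H.\<close>
lemma min_gen_sys_unique:
  assumes irr: "irredundant G" and min: "min_gen_sys (gen G) H"
  shows "H = G"
proof -
  have eq: "gen H = gen G" and proper: "\<And>K. K \<subset> H \<Longrightarrow> gen K \<noteq> gen G"
    using min unfolding min_gen_sys_def by auto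
  have "0 \<notin> H"
  proof
    assume "0 \<in> H"
    then have "H - {0} \<subset> H" by auto
    then show False using proper gen_Diff_zero eq by metis
  qed
  have "G \<subseteq> H"
  proof
    fix g assume g: "g \<in> G"
    then have "g \<noteq> 0" using irr gen_zero unfolding irredundant_def by metis
    have "g \<in> gen H" using eq gen_base[OF g] by simp
    then show "g \<in> H"
    proof (cases rule: gen.cases)
      case (gen_add h s)
      show ?thesis
      proof (rule ccontr)
        assume "g \<notin> H"
        then have "s \<noteq> 0" using gen_add by (metis add_0_right)
        have "h \<noteq> 0" using gen_add \<open>0 \<notin> H\<close> by metis
        have "h \<in> gen (G - {g})"
          using gen_Diff_greater[of h G g] gen_base[of h H] gen_add \<open>s \<noteq> 0\<close> eq by auto
        moreover have "s \<in> gen (G - {g})"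
          using gen_Diff_greater[of s G g] gen_add \<open>h \<noteq> 0\<close> eq by auto
        ultimately have "g \<in> gen (G - {g})" using gen_add gen_add_closed by auto
        then show False using irr g by (auto simp: irredundant_def)
      qed
    qed (use \<open>g \<noteq> 0\<close> in simp)
  qed
  then show "H = G" using proper eq by blast
qed

section \<open>Arithmetic of coprime weights\<close>

lemma coprime_representable:
  fixes a b n :: nat
  assumes "coprime a b" "0 < b" "a * b \<le> n"
  shows "\<exists>i j. n = i * a + j * b"
proof -
  obtain x where x: "[a * x = 1] (mod b)" using cong_solve_coprime_nat[OF assms(1)] by auto
  define i where "i = (x * n) mod b"
  have "[a * i = a * (x * n)] (mod b)" unfolding i_def by (simp add: cong_def mod_mult_right_eq)
  also have "[a * (x * n) = 1 * n] (mod b)" using cong_mult[OF x cong_refl[of n]] by (simp add: mult.assoc)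
  finally have i: "[a * i = n] (mod b)" by simp
  have "a * i \<le> a * b" using assms(2) by (simp add: i_def)
  then have le: "a * i \<le> n" using assms(3) by linarith
  then have "[n - a * i = 0] (mod b)" using i by (simp add: cong_diff_iff_cong_0_nat cong_sym)
  then obtain j where "n - a * i = b * j" by (auto simp: cong_0_iff)
  then have "n = i * a + j * b" using le by (simp add: algebra_simps)
  then show ?thesis by blast
qed

lemma cong_solve_linear_nat:
  fixes a m c t :: nat
  assumes "coprime a m" "0 < m"
  shows "\<exists>l<m. [l * a + c = t] (mod m)"
proof -
  obtain x where x: "[a * x = 1] (mod m)" using cong_solve_coprime_nat[OF assms(1)] by auto
  define t' where "t' = t + (m - 1) * c" \<comment> \<open>(m - 1) c stands for -c modulo m\<close>
  define l where "l = (x * t') mod m"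
  have "[l * a = t' * (a * x)] (mod m)" unfolding l_def by (simp add: cong_def mod_mult_right_eq ac_simps)
  also have "[t' * (a * x) = t' * 1] (mod m)" using cong_mult[OF cong_refl x] .
  finally have "[l * a + c = t' + c] (mod m)" by (simp add: cong_add_rcancel_nat)
  moreover have "t' + c = t + m * c" using assms(2) by (cases m) (simp_all add: t'_def)
  ultimately have "[l * a + c = t] (mod m)" by (simp add: cong_def)
  moreover have "l < m" unfolding l_def using assms(2) by simp
  ultimately show ?thesis by blast
qed

lemma coprime_representations:
  fixes p q a b a' b' :: nat
  assumes "coprime p q" "0 < q" "a * p + b * q = a' * p + b' * q"
  shows "\<exists>t. (a = a' + t * q \<and> b' = b + t * p) \<or> (a' = a + t * q \<and> b = b' + t * p)"
proof -
  have shift: "\<exists>t. a = a' + t * q \<and> b' = b + t * p"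
    if "a' \<le> a" "a * p + b * q = a' * p + b' * q" for a b a' b'
  proof -
    have e: "(a - a') * p + b * q = b' * q"
      using that by (simp add: diff_mult_distrib)
    then have "q dvd (a - a') * p" by (metis dvd_add_left_iff dvd_triv_right)
    then have "q dvd a - a'" using assms(1) by (simp add: coprime_commute coprime_dvd_mult_left_iff)
    then obtain t where t: "a - a' = t * q" by (metis dvdE mult.commute)
    then have "(t * p + b) * q = b' * q" using e by (simp add: algebra_simps)
    then have "b' = b + t * p" using assms(2) by simp
    moreover have "a = a' + t * q" using t that(1) by simp
    ultimately show ?thesis by blast
  qed
  show ?thesis
    using shift[of a' a b b'] shift[of a a' b' b] assms(3) by (cases "a' \<le> a") auto
qed

lemma prime_product_eq:
  fixes a b c d :: nat
  assumes "prime a" "prime b" "prime c" "prime d" "a * b = c * d"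
  shows "(a = c \<and> b = d) \<or> (a = d \<and> b = c)"
proof -
  have "a = c \<or> a = d"
    using assms by (metis dvd_triv_left prime_dvd_multD primes_dvd_imp_eq)
  then show ?thesis using assms prime_gt_0_nat by auto
qed

lemma prime_product_not_in_gen:
  fixes P Q R T :: nat
  assumes "prime P" "prime Q" "prime R" "prime T" "P \<noteq> Q" "R \<noteq> T" "P < T"
  shows "P * R \<notin> gen {Q * R, P * T, Q * T}"
proof
  assume "P * R \<in> gen {Q * R, P * T, Q * T}"
  then obtain i s where PR: "P * R = i * (Q * R) + s" and s: "s \<in> gen {P * T, Q * T}"
    unfolding gen_insert[of "Q * R"] by blast
  have "T dvd s" by (rule gen_dvd[OF s]) auto
  then obtain m where m: "s = T * m" by blast
  have "R dvd T * m" using PR m by (metis dvd_add_right_iff dvd_triv_right mult.assoc)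
  moreover have "coprime R T" using assms primes_coprime by blast
  ultimately have "R dvd m" by (simp add: coprime_dvd_mult_right_iff)
  show False
  proof (cases "m = 0")
    case True
    then have "P = i * Q" using PR m prime_gt_0_nat[OF assms(3)] by simp
    then show False using assms primes_dvd_imp_eq by (metis dvd_triv_right)
  next
    case False
    then have "T * R \<le> T * m" using \<open>R dvd m\<close> by (simp add: dvd_imp_le)
    moreover have "P * R < T * R" using assms prime_gt_0_nat by simp
    ultimately show False using PR m by linarith
  qed
qed

section \<open>Apery sets and the free condition\<close>

lemma Apery_mod_inj:
  assumes "n \<in> gen X" "w \<in> Apery (gen X) n" "w' \<in> Apery (gen X) n" "w mod n = w' mod n"
  shows "w = w'"
proof -
  have le_imp_eq: "v = v'"
    if v: "v \<in> Apery (gen X) n" and v': "v' \<in> Apery (gen X) n"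
      and mod: "v mod n = v' mod n" and le: "v \<le> v'" for v v'
  proof (rule ccontr)
    assume "v \<noteq> v'"
    obtain k where k: "v' - v = n * k" using mod le by (metis mod_eq_dvd_iff_nat dvdE)
    with \<open>v \<noteq> v'\<close> le obtain j where "k = Suc j" by (cases k) auto
    then have "v' = v + n + j * n" using k le by (simp add: algebra_simps)
    moreover have "v + j * n \<in> gen X"
      using v assms(1) by (auto simp: Apery_def intro: gen_add_closed gen_mult)
    ultimately show False using v' by (simp add: Apery_def)
  qed
  show ?thesis
    using le_imp_eq[OF assms(2-4)] le_imp_eq[OF assms(3,2) assms(4)[symmetric]] by linarith
qed

lemma phi_ge:
  assumes "0 < i" "i < length ns" "0 < ns ! 0"
    and none: "\<And>h. 0 < h \<Longrightarrow> h < L \<Longrightarrow> h * ns ! i \<notin> gen (set (take i ns))"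
  shows "L - 1 \<le> phi ns i"
proof -
  let ?P = "\<lambda>h. 0 < h \<and> h * ns ! i \<in> gen (set (take i ns))"
  have "ns ! 0 \<in> set (take i ns)" using assms(1,2) by (simp add: in_set_conv_nth) (use assms(1) in force)
  then have "?P (ns ! 0)" using assms(3) gen_mult[OF gen_base, of "ns ! 0" _ "ns ! i"] by (simp add: mult.commute)
  then have "?P (LEAST h. ?P h)" by (rule LeastI)
  then show ?thesis using none unfolding phi_def by (meson diff_le_mono not_less)
qed

lemma phi_ge_coprime:
  assumes "0 < i" "i < length ns" "0 < ns ! 0"
    and "\<And>a. a \<in> set (take i ns) \<Longrightarrow> d dvd a" "coprime (ns ! i) d"
  shows "d - 1 \<le> phi ns i"
proof (rule phi_ge[OF assms(1-3)])
  fix h assume h: "0 < h" "h < d"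
  show "h * ns ! i \<notin> gen (set (take i ns))"
  proof
    assume "h * ns ! i \<in> gen (set (take i ns))"
    then have "d dvd h * ns ! i" using assms(4) by (rule gen_dvd)
    then have "d dvd h" using assms(5) by (simp add: coprime_commute coprime_dvd_mult_left_iff)
    then show False using h by (simp add: nat_dvd_not_less)
  qed
qed

lemma phi_ge_one:
  assumes "0 < i" "i < length ns" "0 < ns ! 0" "ns ! i \<notin> gen (set (take i ns))"
  shows "1 \<le> phi ns i"
proof -
  have "2 - 1 \<le> phi ns i"
  proof (rule phi_ge[OF assms(1-3)])
    fix h :: nat assume "0 < h" "h < 2"
    then have "h = 1" by simp
    then show "h * ns ! i \<notin> gen (set (take i ns))" using assms(4) by simp
  qed
  then show ?thesis by simp
qed

definition phi_box :: "nat list \<Rightarrow> nat set" where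
  "phi_box ns = {(\<Sum>i\<in>{1..<length ns}. l i * ns ! i) | l. \<forall>i\<in>{1..<length ns}. l i \<le> phi ns i}"

lemma free_sg_phi_box:
  "free_sg S \<longleftrightarrow>
     (\<exists>ns. distinct ns \<and> min_gen_sys S (set ns) \<and> ns \<noteq> [] \<and> Apery S (ns ! 0) = phi_box ns)"
  by (simp add: free_sg_def phi_box_def)

lemma phi_box4_memI:
  assumes "l2 \<le> phi [n1, n2, n3, n4] 1" "l3 \<le> phi [n1, n2, n3, n4] 2" "l4 \<le> phi [n1, n2, n3, n4] 3"
  shows "l2 * n2 + l3 * n3 + l4 * n4 \<in> phi_box [n1, n2, n3, n4]"
proof -
  define l where "l i = (if i = 1 then l2 else if i = 2 then l3 else l4)" for i :: nat
  have idx: "{1..<length [n1, n2, n3, n4]} = {1, 2, 3}" by auto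
  have "\<forall>i\<in>{1..<length [n1, n2, n3, n4]}. l i \<le> phi [n1, n2, n3, n4] i"
    unfolding idx using assms by (simp add: l_def)
  moreover have "l2 * n2 + l3 * n3 + l4 * n4 = (\<Sum>i\<in>{1..<length [n1, n2, n3, n4]}. l i * [n1, n2, n3, n4] ! i)"
    by (simp add: idx l_def)
  ultimately show ?thesis unfolding phi_box_def by blast
qed

lemma length4_eq: "length xs = 4 \<Longrightarrow> xs = [xs ! 0, xs ! 1, xs ! 2, xs ! 3]"
  by (cases xs; cases "tl xs"; cases "tl (tl xs)"; cases "tl (tl (tl xs))"; simp)

text \<open>The box allows coefficients up to P - 1 on n2 and R - 1 on n3, so by the Chinese
  remainder theorem it contains some l2 n2 + l3 n3 congruent to n4 modulo n1 = P R.\<close>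
lemma Apery_ne_phi_box:
  fixes n1 n2 n3 n4 P Q R :: nat
  assumes n1: "n1 = P * R" and n2: "n2 = Q * R" and pos: "0 < P" "0 < R"
    and cop: "coprime n2 P" "coprime n3 R"
    and n4: "n4 \<notin> gen {n1, n2, n3}" and "n1 \<in> gen X"
  shows "Apery (gen X) n1 \<noteq> phi_box [n1, n2, n3, n4]"
proof
  assume Apery: "Apery (gen X) n1 = phi_box [n1, n2, n3, n4]"
  let ?ns = "[n1, n2, n3, n4]"
  have "0 < n1" using n1 pos by simp
  have phi1: "P - 1 \<le> phi ?ns 1"
    using cop(1) \<open>0 < n1\<close> by (intro phi_ge_coprime) (auto simp: n1)
  have phi2: "R - 1 \<le> phi ?ns 2"
    using cop(2) \<open>0 < n1\<close> by (intro phi_ge_coprime) (auto simp: n1 n2)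
  have phi3: "1 \<le> phi ?ns 3"
    using n4 \<open>0 < n1\<close> by (intro phi_ge_one) auto
  obtain l3 where l3: "l3 < R" "[l3 * n3 + 0 = n4] (mod R)"
    using cong_solve_linear_nat[OF cop(2) pos(2)] by blast
  obtain l2 where l2: "l2 < P" "[l2 * n2 + l3 * n3 = n4] (mod P)"
    using cong_solve_linear_nat[OF cop(1) pos(1)] by blast
  define w where "w = l2 * n2 + l3 * n3"
  have "[w = n4] (mod R)"
    using l3(2) by (simp add: w_def n2 cong_def mod_add_left_eq[symmetric])
  moreover have "[w = n4] (mod P)" using l2(2) by (simp add: w_def)
  moreover have "coprime P R" using cop(1) n2 by (simp add: coprime_commute)
  ultimately have "[w = n4] (mod n1)" using n1 coprime_cong_mult_nat by (metis mult.commute)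
  moreover have "w \<in> Apery (gen X) n1"
    using phi_box4_memI[of l2 n1 n2 n3 n4 l3 0] phi1 phi2 l2(1) l3(1) Apery by (simp add: w_def)
  moreover have "n4 \<in> Apery (gen X) n1"
    using phi_box4_memI[of 0 n1 n2 n3 n4 0 1] phi3 Apery by simp
  ultimately have "w = n4" using Apery_mod_inj[OF \<open>n1 \<in> gen X\<close>] by (simp add: cong_def)
  moreover have "w \<in> gen {n1, n2, n3}" unfolding w_def
    by (intro gen_add_closed gen_mult gen_base) auto
  ultimately show False using n4 by simp
qed

section \<open>Congruences on N^\<nu>\<close>

lemma vadd_vecs: "x \<in> vecs \<nu> \<Longrightarrow> z \<in> vecs \<nu> \<Longrightarrow> vadd x z \<in> vecs \<nu>"
  by (simp add: vecs_def vadd_def)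

lemma fact_map_vadd: "fact_map ns (vadd x z) = fact_map ns x + fact_map ns z"
  by (simp add: fact_map_def vadd_def sum.distrib algebra_simps)

definition vec_congruence :: "nat \<Rightarrow> ((nat \<Rightarrow> nat) \<times> (nat \<Rightarrow> nat)) set \<Rightarrow> bool" where
  "vec_congruence \<nu> E \<longleftrightarrow> (\<forall>x\<in>vecs \<nu>. (x, x) \<in> E) \<and> sym E \<and> trans E \<and>
     (\<forall>x y z. (x, y) \<in> E \<longrightarrow> z \<in> vecs \<nu> \<longrightarrow> (vadd x z, vadd y z) \<in> E)"

lemma cong_gen_least:
  assumes "\<rho> \<subseteq> E" "vec_congruence \<nu> E"
  shows "cong_gen \<nu> \<rho> \<subseteq> E"
proof clarify
  fix x y assume "(x, y) \<in> cong_gen \<nu> \<rho>"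
  then show "(x, y) \<in> E"
    by (induction rule: cong_gen.induct)
      (use assms in \<open>auto simp: vec_congruence_def dest: symD transD\<close>)
qed

lemma vec_congruence_kernel_cong: "vec_congruence (length ns) (kernel_cong ns)"
  by (auto simp: vec_congruence_def kernel_cong_def sym_def trans_def fact_map_vadd vadd_vecs)

lemma vec_congruence_fibres:
  assumes "\<And>x z. f (vadd x z) = f x + (f z :: nat)"
  shows "vec_congruence \<nu> {(x, y). f x = f y}"
  using assms by (auto simp: vec_congruence_def sym_def trans_def)

definition agree_below ::
    "((nat \<Rightarrow> nat) \<Rightarrow> nat) \<Rightarrow> nat \<Rightarrow> nat set \<Rightarrow> ((nat \<Rightarrow> nat) \<times> (nat \<Rightarrow> nat)) set" where
  "agree_below f N I = {(x, y). f x = f y \<and> (f x < N \<longrightarrow> (\<forall>i\<in>I. x i = y i))}"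

lemma vec_congruence_agree_below:
  assumes "\<And>x z. f (vadd x z) = f x + (f z :: nat)"
  shows "vec_congruence \<nu> (agree_below f N I)"
  using assms by (auto simp: vec_congruence_def agree_below_def sym_def trans_def vadd_def)

lemma cong_gen_strict_mono:
  assumes separated: "\<And>r. r \<in> \<rho> \<Longrightarrow> \<exists>E. vec_congruence \<nu> E \<and> \<rho> - {r} \<subseteq> E \<and> r \<notin> E"
    and "\<sigma> \<subset> \<rho>"
  shows "cong_gen \<nu> \<sigma> \<noteq> cong_gen \<nu> \<rho>"
proof
  assume eq: "cong_gen \<nu> \<sigma> = cong_gen \<nu> \<rho>"
  obtain r where r: "r \<in> \<rho>" "\<sigma> \<subseteq> \<rho> - {r}" using \<open>\<sigma> \<subset> \<rho>\<close> by blast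
  then obtain E where "vec_congruence \<nu> E" "\<rho> - {r} \<subseteq> E" "r \<notin> E" using separated by blast
  then have "cong_gen \<nu> \<sigma> \<subseteq> E" using r(2) by (intro cong_gen_least) auto
  then show False using eq r(1) \<open>r \<notin> E\<close> cg_base by blast
qed

lemma cong_gen_iterate:
  assumes "(x, y) \<in> cong_gen \<nu> \<rho>" "x \<in> vecs \<nu>" "y \<in> vecs \<nu>" "w \<in> vecs \<nu>"
  shows "(vadd w (\<lambda>i. k * x i), vadd w (\<lambda>i. k * y i)) \<in> cong_gen \<nu> \<rho>"
  using assms(4)
proof (induction k arbitrary: w)
  case 0
  then show ?case by (simp add: vadd_def cg_refl)
next
  case (Suc k)
  have "(\<lambda>i. k * x i) \<in> vecs \<nu>" using assms(2) by (simp add: vecs_def)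
  then have "(vadd x (vadd w (\<lambda>i. k * x i)), vadd y (vadd w (\<lambda>i. k * x i))) \<in> cong_gen \<nu> \<rho>"
    using Suc.prems by (intro cg_add assms(1) vadd_vecs)
  moreover have "(vadd (vadd w y) (\<lambda>i. k * x i), vadd (vadd w y) (\<lambda>i. k * y i)) \<in> cong_gen \<nu> \<rho>"
    using Suc.prems assms(3) by (intro Suc.IH vadd_vecs)
  ultimately show ?case by (auto simp: vadd_def algebra_simps intro: cg_trans)
qed

definition vec4 :: "nat \<Rightarrow> nat \<Rightarrow> nat \<Rightarrow> nat \<Rightarrow> nat \<Rightarrow> nat" where
  "vec4 a b c d = (\<lambda>i. if i = 0 then a else if i = 1 then b else if i = 2 then c else if i = 3 then d else 0)"

lemma vec4_in_vecs [simp]: "vec4 a b c d \<in> vecs 4"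
  by (simp add: vec4_def vecs_def)

lemma vec4_nth [simp]:
  "vec4 a b c d 0 = a" "vec4 a b c d (Suc 0) = b" "vec4 a b c d 2 = c" "vec4 a b c d 3 = d"
  by (simp_all add: vec4_def)

lemma vecs4_eq_vec4: "x \<in> vecs 4 \<Longrightarrow> x = vec4 (x 0) (x 1) (x 2) (x 3)"
  by (auto simp: vecs_def vec4_def fun_eq_iff)

lemma vadd_vec4 [simp]:
  "vadd (vec4 a b c d) (vec4 a' b' c' d') = vec4 (a + a') (b + b') (c + c') (d + d')"
  by (auto simp: vadd_def vec4_def)

lemma scale_vec4 [simp]: "(\<lambda>i. k * vec4 a b c d i) = vec4 (k * a) (k * b) (k * c) (k * d)"
  by (auto simp: vec4_def)

lemma vec4_eq_iff: "vec4 a b c d = vec4 a' b' c' d' \<longleftrightarrow> a = a' \<and> b = b' \<and> c = c' \<and> d = d'"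
  by (metis vec4_nth numeral_2_eq_2 numeral_3_eq_3 One_nat_def)

lemma fact_map_vec4:
  "fact_map [n1, n2, n3, n4] x = x 0 * n1 + x 1 * n2 + x 2 * n3 + x 3 * n4"
  by (simp add: fact_map_def numeral_eq_Suc lessThan_Suc)

section \<open>The semigroup generated by the four prime products\<close>

locale prime_grid =
  fixes p1 p2 q1 q2 :: nat
  assumes prime: "prime p1" "prime p2" "prime q1" "prime q2"
    and distinct: "distinct [p1, p2, q1, q2]"
    and large: "p1 * p2 < q1" "p1 * p2 < q2"
begin

definition G :: "nat set" where
  "G = {p1 * q1, p2 * q1, p1 * q2, p2 * q2}"

definition gens :: "nat list" where
  "gens = [p1 * q1, p2 * q1, p1 * q2, p2 * q2]"

lemma pos: "0 < p1" "0 < p2" "0 < q1" "0 < q2"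
  using prime prime_gt_0_nat by auto

lemma coprime: "coprime p1 p2" "coprime p1 q1" "coprime p1 q2" "coprime p2 q1" "coprime p2 q2" "coprime q1 q2"
  using prime distinct by (simp_all add: primes_coprime)

lemma p_less_q: "p1 < q1" "p2 < q1" "p1 < q2" "p2 < q2"
proof -
  have "p1 \<le> p1 * p2" "p2 \<le> p1 * p2" using pos by simp_all
  then show "p1 < q1" "p2 < q1" "p1 < q2" "p2 < q2" using large by linarith+
qed

lemma distinct_gens: "distinct gens"
  using prime_product_eq[of p1 q1 p2 q2] prime_product_eq[of p2 q1 p1 q2] prime distinct pos
  by (auto simp: gens_def)

lemma length_gens: "length gens = 4"
  by (simp add: gens_def)

lemma set_gens: "set gens = G"
  by (simp add: gens_def G_def)

lemma card_G: "card G = 4"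
  using distinct_gens distinct_card set_gens by (fastforce simp: gens_def)

lemma irredundant_G: "irredundant G"
proof -
  have "G - {p1 * q1} = {p2 * q1, p1 * q2, p2 * q2}" "G - {p2 * q1} = {p1 * q1, p2 * q2, p1 * q2}"
    "G - {p1 * q2} = {p2 * q2, p1 * q1, p2 * q1}" "G - {p2 * q2} = {p1 * q2, p2 * q1, p1 * q1}"
    using distinct_gens by (auto simp: G_def gens_def)
  moreover have "p1 * q1 \<notin> gen {p2 * q1, p1 * q2, p2 * q2}" "p2 * q1 \<notin> gen {p1 * q1, p2 * q2, p1 * q2}"
    "p1 * q2 \<notin> gen {p2 * q2, p1 * q1, p2 * q1}" "p2 * q2 \<notin> gen {p1 * q2, p2 * q1, p1 * q1}"
    using prime distinct p_less_q by (simp_all add: prime_product_not_in_gen)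
  ultimately show ?thesis by (auto simp: irredundant_def G_def)
qed

lemma numerical_semigroup_gen_G: "numerical_semigroup (gen G)"
  unfolding numerical_semigroup_def
proof (intro conjI ballI)
  have "coprime (p1 * q1) (p2 * q2)" using coprime by (simp add: coprime_commute)
  moreover have "i * (p1 * q1) + j * (p2 * q2) \<in> gen G" for i j
    by (intro gen_add_closed gen_mult gen_base) (auto simp: G_def)
  ultimately have "n \<in> gen G" if "p1 * q1 * (p2 * q2) \<le> n" for n
    using coprime_representable[of "p1 * q1" "p2 * q2" n] that pos by auto
  then have "UNIV - gen G \<subseteq> {..< p1 * q1 * (p2 * q2)}" by (meson DiffD2 lessThan_iff not_le subsetI)
  then show "finite (UNIV - gen G)" by (rule finite_subset) simp
qed (auto intro: gen_zero gen_add_closed)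

definition block1 :: "(nat \<Rightarrow> nat) \<Rightarrow> nat" where
  "block1 x = x 0 * p1 + x 1 * p2"

definition block2 :: "(nat \<Rightarrow> nat) \<Rightarrow> nat" where
  "block2 x = x 2 * p1 + x 3 * p2"

lemma fact_map_gens: "fact_map gens x = q1 * block1 x + q2 * block2 x"
  by (simp add: gens_def fact_map_vec4 block1_def block2_def algebra_simps)

lemma block1_vec4 [simp]: "block1 (vec4 a b c d) = a * p1 + b * p2"
  by (simp add: block1_def)

lemma block2_vec4 [simp]: "block2 (vec4 a b c d) = c * p1 + d * p2"
  by (simp add: block2_def)

lemma block1_vadd: "block1 (vadd x z) = block1 x + block1 z"
  by (simp add: block1_def vadd_def algebra_simps)

end

text \<open>Coordinates 0..3 of a vector refer to the generators p1 q1, p2 q1, p1 q2, p2 q2.\<close>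
locale prime_grid_presentation = prime_grid +
  fixes \<alpha> \<beta> \<gamma> \<delta> :: nat
  assumes coeffs: "\<alpha> * p1 + \<beta> * p2 = q2" "\<gamma> * p1 + \<delta> * p2 = q1"
begin

definition rel1 :: "(nat \<Rightarrow> nat) \<times> (nat \<Rightarrow> nat)" where "rel1 = (vec4 p2 0 0 0, vec4 0 p1 0 0)"
definition rel2 :: "(nat \<Rightarrow> nat) \<times> (nat \<Rightarrow> nat)" where "rel2 = (vec4 0 0 p2 0, vec4 0 0 0 p1)"
definition rel3 :: "(nat \<Rightarrow> nat) \<times> (nat \<Rightarrow> nat)" where "rel3 = (vec4 \<alpha> \<beta> 0 0, vec4 0 0 \<gamma> \<delta>)"
definition rels :: "((nat \<Rightarrow> nat) \<times> (nat \<Rightarrow> nat)) set" where "rels = {rel1, rel2, rel3}"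

abbreviation cong_rels :: "((nat \<Rightarrow> nat) \<times> (nat \<Rightarrow> nat)) set" where "cong_rels \<equiv> cong_gen 4 rels"

lemma rel1_in_cong_rels: "(vec4 p2 0 0 0, vec4 0 p1 0 0) \<in> cong_rels"
  by (rule cg_base) (simp add: rels_def rel1_def)

lemma rel2_in_cong_rels: "(vec4 0 0 p2 0, vec4 0 0 0 p1) \<in> cong_rels"
  by (rule cg_base) (simp add: rels_def rel2_def)

lemma rel3_in_cong_rels: "(vec4 \<alpha> \<beta> 0 0, vec4 0 0 \<gamma> \<delta>) \<in> cong_rels"
  by (rule cg_base) (simp add: rels_def rel3_def)

lemma cong_block1:
  assumes "a * p1 + b * p2 = a' * p1 + b' * p2"
  shows "(vec4 a b c d, vec4 a' b' c d) \<in> cong_rels"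
proof -
  have iter: "(vec4 (a0 + t * p2) b0 c d, vec4 a0 (b0 + t * p1) c d) \<in> cong_rels" for a0 b0 t
    using cong_gen_iterate[OF rel1_in_cong_rels, of "vec4 a0 b0 c d" t]
    by simp
  obtain t where "(a = a' + t * p2 \<and> b' = b + t * p1) \<or> (a' = a + t * p2 \<and> b = b' + t * p1)"
    using coprime_representations[OF coprime(1) pos(2) assms] by blast
  then show ?thesis using iter cg_sym by blast
qed

lemma cong_block2:
  assumes "c * p1 + d * p2 = c' * p1 + d' * p2"
  shows "(vec4 a b c d, vec4 a b c' d') \<in> cong_rels"
proof -
  have iter: "(vec4 a b (c0 + t * p2) d0, vec4 a b c0 (d0 + t * p1)) \<in> cong_rels" for c0 d0 t
    using cong_gen_iterate[OF rel2_in_cong_rels, of "vec4 a b c0 d0" t]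
    by simp
  obtain t where "(c = c' + t * p2 \<and> d' = d + t * p1) \<or> (c' = c + t * p2 \<and> d = d' + t * p1)"
    using coprime_representations[OF coprime(1) pos(2) assms] by blast
  then show ?thesis using iter cg_sym by blast
qed

lemma cong_same_blocks:
  assumes "x \<in> vecs 4" "y \<in> vecs 4" "block1 x = block1 y" "block2 x = block2 y"
  shows "(x, y) \<in> cong_rels"
proof -
  have "(vec4 (x 0) (x 1) (x 2) (x 3), vec4 (y 0) (y 1) (x 2) (x 3)) \<in> cong_rels"
    using assms(3) by (intro cong_block1) (simp add: block1_def)
  moreover have "(vec4 (y 0) (y 1) (x 2) (x 3), vec4 (y 0) (y 1) (y 2) (y 3)) \<in> cong_rels"
    using assms(4) by (intro cong_block2) (simp add: block2_def)
  ultimately show ?thesis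
    using vecs4_eq_vec4[OF assms(1)] vecs4_eq_vec4[OF assms(2)] cg_trans by metis
qed

lemma cong_exchange: "(vec4 (a + k * \<alpha>) (b + k * \<beta>) c d, vec4 a b (c + k * \<gamma>) (d + k * \<delta>)) \<in> cong_rels"
  using cong_gen_iterate[OF rel3_in_cong_rels, of "vec4 a b c d" k]
  by simp

text \<open>Equal factorization maps force the block weights to differ by a multiple of
  (q2, -q1); the exchange relation transfers that multiple from one block to the other.\<close>
lemma kernel_cong_subset: "kernel_cong gens \<subseteq> cong_rels"
proof clarify
  have shift: "(x, y) \<in> cong_rels"
    if "x \<in> vecs 4" "y \<in> vecs 4" "block1 x = block1 y + k * q2" "block2 y = block2 x + k * q1"
    for x y k
  proof -
    define z1 where "z1 = vec4 (y 0 + k * \<alpha>) (y 1 + k * \<beta>) (x 2) (x 3)"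
    define z2 where "z2 = vec4 (y 0) (y 1) (x 2 + k * \<gamma>) (x 3 + k * \<delta>)"
    have "block1 z1 = block1 y + k * (\<alpha> * p1 + \<beta> * p2)" "block2 z2 = block2 x + k * (\<gamma> * p1 + \<delta> * p2)"
      by (simp_all add: z1_def z2_def block1_def block2_def algebra_simps)
    then have "(x, z1) \<in> cong_rels" "(z2, y) \<in> cong_rels"
      using that coeffs by (auto intro!: cong_same_blocks simp: z1_def z2_def block1_def block2_def)
    moreover have "(z1, z2) \<in> cong_rels" unfolding z1_def z2_def by (rule cong_exchange)
    ultimately show ?thesis by (blast intro: cg_trans)
  qed
  fix x y assume "(x, y) \<in> kernel_cong gens"
  then have x: "x \<in> vecs 4" and y: "y \<in> vecs 4"
    and "block1 x * q1 + block2 x * q2 = block1 y * q1 + block2 y * q2"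
    by (auto simp: kernel_cong_def length_gens fact_map_gens mult.commute)
  then obtain k where "(block1 x = block1 y + k * q2 \<and> block2 y = block2 x + k * q1) \<or>
      (block1 y = block1 x + k * q2 \<and> block2 x = block2 y + k * q1)"
    using coprime_representations[OF coprime(6) pos(4)] by blast
  then show "(x, y) \<in> cong_rels" using shift[OF x y] shift[OF y x] cg_sym by blast
qed

lemma rels_subset_kernel_cong: "rels \<subseteq> kernel_cong gens"
  using coeffs by (auto simp: rels_def rel1_def rel2_def rel3_def kernel_cong_def length_gens
      fact_map_gens mult_ac)

lemma cong_gen_rels: "cong_rels = kernel_cong gens"
  using kernel_cong_subset cong_gen_least[OF rels_subset_kernel_cong]
    vec_congruence_kernel_cong[of gens] by (auto simp: length_gens)

text \<open>rel1 and rel2 are separated by agreement of their coordinates on vectors whose value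
  is below q1 q2, the value of rel3; rel3 is separated by the weight of the first block.\<close>
lemma rels_separated:
  assumes "r \<in> rels"
  shows "\<exists>E. vec_congruence 4 E \<and> rels - {r} \<subseteq> E \<and> r \<notin> E"
proof -
  let ?E = "agree_below (fact_map gens) (q1 * q2)"
  have agree: "vec_congruence 4 (?E I)" for I
    by (rule vec_congruence_agree_below) (rule fact_map_vadd)
  have fibres: "vec_congruence 4 {(x, y). block1 x = block1 y}"
    by (rule vec_congruence_fibres) (rule block1_vadd)
  have rel1_value: "q1 * (p1 * p2) < q1 * q2" and rel2_value: "q2 * (p1 * p2) < q1 * q2"
    using large pos by simp_all
  consider "r = rel1" | "r = rel2" | "r = rel3" using assms by (auto simp: rels_def)
  then show ?thesis
  proof cases
    case 1
    have "rel2 \<in> ?E {0, 1}" "rel3 \<in> ?E {0, 1}" "rel1 \<notin> ?E {0, 1}"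
      using coeffs rel1_value pos
      by (simp_all add: agree_below_def rel1_def rel2_def rel3_def fact_map_gens mult_ac)
    then show ?thesis using agree 1 by (intro exI[of _ "?E {0, 1}"]) (auto simp: rels_def)
  next
    case 2
    have "rel1 \<in> ?E {2, 3}" "rel3 \<in> ?E {2, 3}" "rel2 \<notin> ?E {2, 3}"
      using coeffs rel2_value pos
      by (simp_all add: agree_below_def rel1_def rel2_def rel3_def fact_map_gens mult_ac)
    then show ?thesis using agree 2 by (intro exI[of _ "?E {2, 3}"]) (auto simp: rels_def)
  next
    case 3
    have "rel1 \<in> {(x, y). block1 x = block1 y}" "rel2 \<in> {(x, y). block1 x = block1 y}"
      "rel3 \<notin> {(x, y). block1 x = block1 y}"
      using coeffs pos by (simp_all add: rel1_def rel2_def rel3_def mult.commute)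
    then show ?thesis using fibres 3
      by (intro exI[of _ "{(x, y). block1 x = block1 y}"]) (auto simp: rels_def)
  qed
qed

lemma minimal_presentation_rels: "minimal_presentation gens rels"
  unfolding minimal_presentation_def
proof (intro conjI allI impI)
  show "rels \<subseteq> vecs (length gens) \<times> vecs (length gens)"
    by (simp add: rels_def rel1_def rel2_def rel3_def length_gens)
  show "cong_gen (length gens) rels = kernel_cong gens"
    using cong_gen_rels by (simp add: length_gens)
  fix \<sigma> assume "\<sigma> \<subset> rels"
  then show "cong_gen (length gens) \<sigma> \<noteq> kernel_cong gens"
    using cong_gen_strict_mono[OF rels_separated] cong_gen_rels by (simp add: length_gens)
qed

lemma card_rels: "card rels = 3"
  using pos by (simp add: rels_def rel1_def rel2_def rel3_def vec4_eq_iff)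

end

context prime_grid
begin

lemma complete_intersection_gen_G: "complete_intersection (gen G)"
proof -
  obtain \<alpha> \<beta> where "q2 = \<alpha> * p1 + \<beta> * p2"
    using coprime_representable[OF coprime(1) pos(2)] large(2) by (meson less_imp_le)
  moreover obtain \<gamma> \<delta> where "q1 = \<gamma> * p1 + \<delta> * p2"
    using coprime_representable[OF coprime(1) pos(2)] large(1) by (meson less_imp_le)
  ultimately interpret prime_grid_presentation p1 p2 q1 q2 \<alpha> \<beta> \<gamma> \<delta>
    by unfold_locales simp_all
  show ?thesis
    unfolding complete_intersection_def
    using distinct_gens irredundant_min_gen_sys[OF irredundant_G] set_gens
      minimal_presentation_rels card_rels
    by (intro exI[of _ gens] exI[of _ rels]) (simp add: rels_def gens_def)
qed

lemma Apery_first_ne_phi_box: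
  assumes "distinct ms" "set ms = G" "ms ! 0 = p1 * q1"
  shows "Apery (gen G) (p1 * q1) \<noteq> phi_box ms"
proof -
  have "length ms = 4" using distinct_card[OF assms(1)] assms(2) card_G by simp
  then obtain n2 n3 n4 where ms: "ms = [p1 * q1, n2, n3, n4]"
    using length4_eq assms(3) by metis
  have dist: "distinct [p1 * q1, n2, n3, n4]" and G: "G = {p1 * q1, n2, n3, n4}"
    using assms(1,2) ms by auto
  have "G - {n4} = {p1 * q1, n2, n3}" using dist G by auto
  then have n4: "n4 \<notin> gen {p1 * q1, n2, n3}"
    using irredundant_G G by (auto simp: irredundant_def)
  have n1: "p1 * q1 \<in> gen G" by (simp add: G_def gen_base)
  have "n2 \<in> G" "n3 \<in> G" "n2 \<noteq> p1 * q1" "n3 \<noteq> p1 * q1" "n2 \<noteq> n3"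
    using dist G by auto
  then consider "n2 = p2 * q1" "n3 \<in> {p1 * q2, p2 * q2}" | "n2 = p1 * q2" "n3 \<in> {p2 * q1, p2 * q2}"
    | "n2 = p2 * q2"
    unfolding G_def by blast
  then show ?thesis
  proof cases
    case 1
    then show ?thesis
      using Apery_ne_phi_box[where P = p1 and Q = p2 and R = q1, OF _ _ _ _ _ _ n4 n1] coprime pos
      by (auto simp: ms coprime_commute)
  next
    case 2
    then show ?thesis
      using Apery_ne_phi_box[where P = q1 and Q = q2 and R = p1, OF _ _ _ _ _ _ n4 n1] coprime pos
      by (auto simp: ms coprime_commute mult.commute)
  next
    case 3
    then show ?thesis
      using Apery_ne_phi_box[where P = "p1 * q1" and Q = n2 and R = 1, OF _ _ _ _ _ _ n4 n1] coprime pos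
      by (auto simp: ms coprime_commute)
  qed
qed

lemma not_free_sg_gen_G: "\<not> free_sg (gen G)"
proof
  assume "free_sg (gen G)"
  then obtain ms where ms: "distinct ms" "min_gen_sys (gen G) (set ms)" "ms \<noteq> []"
    and Apery: "Apery (gen G) (ms ! 0) = phi_box ms"
    unfolding free_sg_phi_box by blast
  have set_ms: "set ms = G" using min_gen_sys_unique[OF irredundant_G ms(2)] .
  then have "ms ! 0 \<in> G" using ms(3) by (metis nth_mem length_greater_0_conv)
  interpret swap_p: prime_grid p2 p1 q1 q2
    using prime distinct large by unfold_locales (auto simp: mult.commute)
  interpret swap_q: prime_grid p1 p2 q2 q1
    using prime distinct large by unfold_locales auto
  interpret swap_pq: prime_grid p2 p1 q2 q1
    using prime distinct large by unfold_locales (auto simp: mult.commute)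
  have "swap_p.G = G" "swap_q.G = G" "swap_pq.G = G"
    by (auto simp: G_def swap_p.G_def swap_q.G_def swap_pq.G_def)
  then show False
    using \<open>ms ! 0 \<in> G\<close> Apery ms(1) set_ms Apery_first_ne_phi_box swap_p.Apery_first_ne_phi_box
      swap_q.Apery_first_ne_phi_box swap_pq.Apery_first_ne_phi_box
    by (auto simp: G_def)
qed

end

theorem mainTheorem9:
  fixes p1 p2 p3 p4 :: nat
  assumes "prime p1" "prime p2" "prime p3" "prime p4"
    and "distinct [p1, p2, p3, p4]"
    and "p3 > p1 * p2" "p4 > p1 * p2"
  shows "numerical_semigroup (gen {p1 * p3, p2 * p3, p1 * p4, p2 * p4}) \<and>
         complete_intersection (gen {p1 * p3, p2 * p3, p1 * p4, p2 * p4}) \<and>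
         \<not> free_sg (gen {p1 * p3, p2 * p3, p1 * p4, p2 * p4})"
proof -
  interpret prime_grid p1 p2 p3 p4
    using assms by unfold_locales auto
  show ?thesis
    using numerical_semigroup_gen_G complete_intersection_gen_G not_free_sg_gen_G
    by (simp add: G_def)
qed

end
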